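(* Let $r \geq 3$ and $k \geq \max\{r-1,4\}$ be integers. Define the binary word $x_{k,r} = ((01)^{k-1} 00)^{r-3} (01)^{k-1} 0$. Then $|x_{k,r}| = 2k(r-2)-1$, and $x_{k,r}$ contains no $k$-power as a factor and no $r$-antipower as a factor.
   Context: For a word $u$ and integer $k\ge 1$, $u^k$ denotes the concatenation of $k$ copies of $u$. A $k$-power is a word of the form $u^k$ with $u$ nonempty. An $r$-antipower is a word of the form $u_1 u_2 \cdots u_r$ with $|u_1| = \cdots = |u_r|$ and the words $u_1,\dots,u_r$ pairwise distinct. A factor of a word $w$ is a contiguous subword of $w$. $|w|$ denotes the length of $w$. *)

theory Defs
  imports Main
begin

definition word_pow :: "'a list \<Rightarrow> nat \<Rightarrow> 'a list" where
  "word_pow u k = concat (replicate k u)"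

definition is_factor :: "'a list \<Rightarrow> 'a list \<Rightarrow> bool" where
  "is_factor v w \<longleftrightarrow> (\<exists>p s. w = p @ v @ s)"

definition is_power :: "nat \<Rightarrow> 'a list \<Rightarrow> bool" where
  "is_power k v \<longleftrightarrow> (\<exists>u. u \<noteq> [] \<and> v = word_pow u k)"

definition is_antipower :: "nat \<Rightarrow> 'a list \<Rightarrow> bool" where
  "is_antipower r v \<longleftrightarrow> (\<exists>us :: 'a list list. length us = r \<and> v = concat us \<and>
      (\<forall>i<r. \<forall>j<r. length (us ! i) = length (us ! j)) \<and> distinct us)"

definition x_word :: "nat \<Rightarrow> nat \<Rightarrow> nat list" where
  "x_word k r = word_pow (word_pow [0,1] (k-1) @ [0,0]) (r-3) @ word_pow [0,1] (k-1) @ [0]"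

end

theory Submission
  imports Defs
begin

text \<open>
  The word \<open>x\<^sub>k\<^sub>,\<^sub>r\<close> is the prefix of length \<open>2k(r-2) - 1\<close> of the periodic word
  \<open>((01)\<^sup>k\<^sup>-\<^sup>1 00)\<^sup>\<omega>\<close>. In that word every 1 is isolated, and a factor 00 starts at position \<open>i\<close>
  exactly when \<open>i mod 2k \<in> {2k-2, 2k-1}\<close>; two such positions at distance \<open>p\<close> with
  \<open>1 < p < 2k-1\<close> do not exist.

  A factor \<open>u\<^sup>k\<close> has period \<open>p = |u|\<close>, and its length forces \<open>p < 2k-2\<close>. For \<open>p = 1\<close> it would
  contain 0000, which is absent; for \<open>p \<ge> 2\<close> it is long enough to contain a factor 00 together
  with its translate by \<open>p\<close> in one direction or the other, which is impossible.

  In an \<open>r\<close>-antipower with blocks of length \<open>p\<close>, a block without a factor 00 alternates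
  between 0 and 1, so it is determined by its first letter: at most two blocks are of this kind.
  Every other block contains a position \<open>\<equiv> 2k-1 (mod 2k)\<close>; the blocks are disjoint and
  only \<open>r - 3\<close> such positions lie in \<open>x\<^sub>k\<^sub>,\<^sub>r\<close>, so \<open>r \<le> 2 + (r - 3)\<close>.
\<close>

lemma length_word_pow [simp]: "length (word_pow u n) = n * length u"
  by (induction n) (simp_all add: word_pow_def)

lemma word_pow_Suc: "word_pow u (Suc n) = u @ word_pow u n"
  by (simp add: word_pow_def)

lemma nth_word_pow:
  assumes "i < n * length u"
  shows "word_pow u n ! i = u ! (i mod length u)"
  using assms
proof (induction n arbitrary: i)
  case (Suc n)
  then show ?case
    by (cases "i < length u") (simp_all add: word_pow_Suc nth_append le_mod_geq)
qed simp

lemma word_pow_periodic: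
  assumes "j + length u < length (word_pow u n)"
  shows "word_pow u n ! (j + length u) = word_pow u n ! j"
  using assms by (simp add: nth_word_pow)

lemma map_upt_shift:
  assumes "\<And>i. f (i + a) = f i"
  shows "map f [a..<a + n] = map f [0..<n]"
  using map_add_upt[of a n, symmetric] by (simp add: add.commute assms)

lemma word_pow_map_upt:
  assumes "\<And>i. f (i + m) = f i"
  shows "word_pow (map f [0..<m]) n = map f [0..<n * m]"
proof (induction n)
  case (Suc n)
  then show ?case
    using map_upt_shift[of f m "n * m", OF assms]
    by (simp add: word_pow_Suc upt_add_eq_append[of 0 m "n * m"])
qed (simp add: word_pow_def)

lemma word_pow_01: "word_pow [0, 1] n = map (\<lambda>i. i mod 2) [0..<2 * n]"
proof -
  have "map (\<lambda>i. i mod 2) [0..<2] = [0::nat, 1]"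
    by (simp add: upt_conv_Cons)
  then show ?thesis
    using word_pow_map_upt[of "\<lambda>i. i mod 2" 2 n, OF mod_add_self2] by (simp add: mult.commute)
qed

lemma is_factor_map_upt:
  assumes "is_factor v (map f [0..<n])"
  obtains s where "s + length v \<le> n" and "v = map f [s..<s + length v]"
proof -
  obtain p q where pq: "map f [0..<n] = p @ v @ q"
    using assms by (auto simp: is_factor_def)
  then have "v = take (length v) (drop (length p) (map f [0..<n]))"
    by simp
  moreover have "length p + length v \<le> n"
    using arg_cong[OF pq, of length] by simp
  ultimately show ?thesis
    using that[of "length p"] by (simp add: drop_map take_map)
qed

lemma is_antipowerE:
  assumes "is_antipower r v" and "0 < r"
  obtains us p where "length us = r" and "v = concat us" and "distinct us"
    and "\<forall>u\<in>set us. length u = p"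
proof -
  obtain us where us: "length us = r" "v = concat us" "distinct us"
    and same_length: "\<forall>i<r. \<forall>j<r. length (us ! i) = length (us ! j)"
    using assms(1) unfolding is_antipower_def by blast
  have "\<forall>u\<in>set us. length u = length (us ! 0)"
  proof
    fix u
    assume "u \<in> set us"
    then obtain i where "i < r" and "u = us ! i"
      using us(1) by (auto simp: in_set_conv_nth)
    then show "length u = length (us ! 0)"
      using same_length[rule_format, of i 0] assms(2) by simp
  qed
  with us show ?thesis
    using that by blast
qed

lemma length_concat_same_length:
  "\<forall>u\<in>set us. length u = p \<Longrightarrow> length (concat us) = length us * p"
  by (induction us) auto

lemma concat_eq_map_upt_nth:
  assumes "\<forall>u\<in>set us. length u = p" and "concat us = map f [a..<a + length us * p]"
    and "i < length us"
  shows "us ! i = map f [a + i * p..<a + i * p + p]"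
  using assms
proof (induction us arbitrary: a i)
  case (Cons u us)
  have "[a..<a + length (u # us) * p] = [a..<a + p] @ [a + p..<a + p + length us * p]"
    using upt_add_eq_append[of a "a + p" "length us * p"] by (simp add: add.assoc)
  then have "u = map f [a..<a + p]" and "concat us = map f [a + p..<a + p + length us * p]"
    using Cons.prems(1,2) by simp_all
  then show ?case
    using Cons.prems(1,3) Cons.IH[of "a + p" "i - 1"]
    by (cases i) (simp_all add: algebra_simps)
qed simp

lemma card_alternating_blocks_le_2:
  assumes "distinct bs"
    and "\<forall>i\<in>I. i < length bs \<and> (\<exists>c \<le> 1. bs ! i = map (\<lambda>j. (c + j) mod 2) [0..<p])"
  shows "card I \<le> 2"
proof -
  have "inj_on (nth bs) I"
    using assms by (simp add: inj_on_nth)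
  moreover have "nth bs ` I \<subseteq> (\<lambda>c. map (\<lambda>j. (c + j) mod 2) [0..<p]) ` {0, 1}"
    using assms(2) by (force simp: le_Suc_eq)
  ultimately have "card I \<le> card ((\<lambda>c. map (\<lambda>j. (c + j) mod 2) [0..<p]) ` {0, 1::nat})"
    by (intro card_inj_on_le) auto
  also have "\<dots> \<le> 2"
    using card_image_le[of "{0, 1::nat}" "\<lambda>c. map (\<lambda>j. (c + j) mod 2) [0..<p]"] by simp
  finally show ?thesis .
qed

lemma card_le_if_blocks_meet:
  fixes I S :: "nat set"
  assumes "finite S" and "\<forall>i\<in>I. \<exists>w\<in>S. a + i * p \<le> w \<and> w < a + i * p + p"
  shows "card I \<le> card S"
proof -
  obtain W where W: "\<forall>i\<in>I. W i \<in> S \<and> a + i * p \<le> W i \<and> W i < a + i * p + p"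
    using bchoice[of I "\<lambda>i w. w \<in> S \<and> a + i * p \<le> w \<and> w < a + i * p + p"] assms(2)
    by blast
  have "strict_mono_on I W"
  proof (rule strict_mono_onI)
    fix i i'
    assume "i \<in> I" "i' \<in> I" "i < i'"
    then have "W i < a + i * p + p" and "a + i' * p \<le> W i'"
      using W by blast+
    moreover have "i * p + p \<le> i' * p"
      using mult_le_mono1[of "Suc i" i' p] \<open>i < i'\<close> by simp
    ultimately show "W i < W i'"
      by linarith
  qed
  then show ?thesis
    using W by (intro card_inj_on_le[OF strict_mono_on_imp_inj_on _ assms(1)]) auto
qed

section \<open>Residues in the top two classes\<close>

lemma top_two_residues_gap:
  fixes n i p :: nat
  assumes "n - 2 \<le> i mod n" and "n - 2 \<le> (i + p) mod n" and "0 < p" and "p < n - 1"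
  shows "p = 1 \<and> i mod n = n - 2"
proof -
  define \<rho> where "\<rho> = i mod n"
  have "\<rho> < n"
    using assms(4) by (simp add: \<rho>_def)
  have sum: "(i + p) mod n = (\<rho> + p) mod n"
    by (simp add: \<rho>_def mod_add_left_eq)
  show ?thesis
  proof (cases "\<rho> + p < n")
    case True
    then show ?thesis
      using assms(1,3) unfolding \<rho>_def[symmetric] by arith
  next
    case False
    then have "(i + p) mod n = \<rho> + p - n"
      using sum \<open>\<rho> < n\<close> assms(4) by (simp add: le_mod_geq)
    then show ?thesis
      using False assms(2,4) \<open>\<rho> < n\<close> by arith
  qed
qed

lemma top_two_residue_in_window: "\<exists>m \<le> n - 2. n - 2 \<le> (t + m) mod (n::nat)"
proof (cases "n - 2 \<le> t mod n")
  case True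
  then show ?thesis
    by auto
next
  case False
  define m where "m = n - 2 - t mod n"
  have "(t + m) mod n = (t mod n + m) mod n"
    by (simp add: mod_add_left_eq)
  also have "\<dots> = n - 2"
    using False by (simp add: m_def)
  finally have "(t + m) mod n = n - 2" .
  moreover have "m \<le> n - 2"
    by (simp add: m_def)
  ultimately show ?thesis
    by auto
qed

lemma card_top_residue_le:
  assumes "0 < m"
  shows "card {w. w < m * n - 1 \<and> w mod m = m - 1} \<le> n - 1"
proof -
  have "{w. w < m * n - 1 \<and> w mod m = m - 1} \<subseteq> (\<lambda>d. m * d + (m - 1)) ` {..<n - 1}"
  proof
    fix w
    assume "w \<in> {w. w < m * n - 1 \<and> w mod m = m - 1}"
    then have w: "w < m * n - 1" "w = m * (w div m) + (m - 1)"
      using div_mult_mod_eq[of w m] by (simp_all add: mult.commute)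
    then have "m * Suc (w div m) = w + 1"
      using assms by simp
    also have "\<dots> < m * n"
      using w(1) by linarith
    finally have "Suc (w div m) < n"
      using mult_less_cancel1[of m "Suc (w div m)" n] by simp
    then have "w div m < n - 1"
      by linarith
    then show "w \<in> (\<lambda>d. m * d + (m - 1)) ` {..<n - 1}"
      using w(2) by blast
  qed
  then have "card {w. w < m * n - 1 \<and> w mod m = m - 1}
      \<le> card ((\<lambda>d. m * d + (m - 1)) ` {..<n - 1})"
    by (intro card_mono) auto
  also have "\<dots> \<le> n - 1"
    using card_image_le[of "{..<n - 1}" "\<lambda>d. m * d + (m - 1)"] by simp
  finally show ?thesis .
qed

section \<open>The periodic word \<open>((01)\<^sup>k\<^sup>-\<^sup>1 00)\<^sup>\<omega>\<close>\<close>

definition x_letter :: "nat \<Rightarrow> nat \<Rightarrow> nat" where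
  "x_letter k i = (if 2 * k - 2 \<le> i mod (2 * k) then 0 else i mod 2)"

lemma x_letter_add_period: "x_letter k (i + c * (2 * k)) = x_letter k i"
proof -
  have "(i + c * (2 * k)) mod 2 = i mod 2"
    by (metis mod_mult_self1 mult.left_commute mult.commute)
  then show ?thesis
    by (simp add: x_letter_def)
qed

lemma x_letter_le_1: "x_letter k i \<le> 1"
  by (cases "even i") (simp_all add: x_letter_def even_iff_mod_2_eq_zero odd_iff_mod_2_eq_one)

lemma x_letter_after_1:
  assumes "x_letter k i \<noteq> 0"
  shows "x_letter k (Suc i) = 0"
proof -
  have "i mod (2 * k) < 2 * k - 2" and "odd i"
    using assms by (auto simp: x_letter_def split: if_splits)
  then have "Suc i mod (2 * k) = Suc (i mod (2 * k))" and "even (Suc i)"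
    by (auto simp: mod_Suc)
  then show ?thesis
    by (simp add: x_letter_def)
qed

lemma x_letter_00_iff:
  assumes "2 \<le> k"
  shows "x_letter k i = 0 \<and> x_letter k (Suc i) = 0 \<longleftrightarrow> 2 * k - 2 \<le> i mod (2 * k)"
proof -
  define \<rho> where "\<rho> = i mod (2 * k)"
  have "\<rho> < 2 * k"
    using assms by (simp add: \<rho>_def)
  have parity: "i mod 2 = \<rho> mod 2" "Suc i mod 2 = Suc i mod (2 * k) mod 2"
    by (simp_all add: \<rho>_def mod_mod_cancel)
  show ?thesis
  proof (cases "2 * k - 2 \<le> \<rho>")
    case True
    then consider "\<rho> = 2 * k - 2" | "\<rho> = 2 * k - 1"
      using \<open>\<rho> < 2 * k\<close> by linarith
    then have "Suc i mod (2 * k) = 2 * k - 1 \<or> Suc i mod (2 * k) = 0"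
      using assms by cases (auto simp: \<rho>_def mod_Suc)
    then show ?thesis
      using True assms parity(2) by (auto simp: x_letter_def \<rho>_def)
  next
    case False
    then have succ: "Suc i mod (2 * k) = Suc \<rho>"
      by (simp add: \<rho>_def mod_Suc)
    have "odd \<rho>" if "Suc \<rho> = 2 * k - 2"
    proof -
      have "Suc \<rho> = 2 * (k - 1)"
        using that by (simp add: right_diff_distrib')
      then show ?thesis
        by presburger
    qed
    then show ?thesis
      using False parity
      by (auto simp: x_letter_def \<rho>_def[symmetric] succ odd_iff_mod_2_eq_one)
  qed
qed

lemma x_letter_alternating:
  assumes "2 \<le> k" and no_00: "\<And>j. Suc j < p \<Longrightarrow> (a + j) mod (2 * k) < 2 * k - 2"
    and "j < p"
  shows "x_letter k (a + j) = (x_letter k a + j) mod 2"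
  using assms(3)
proof (induction j)
  case 0
  show ?case
    using x_letter_le_1[of k a] by (cases "x_letter k a") simp_all
next
  case (Suc j)
  have not_00: "\<not> (x_letter k (a + j) = 0 \<and> x_letter k (Suc (a + j)) = 0)"
    using x_letter_00_iff[OF assms(1)] no_00[OF Suc.prems] by (simp add: not_le)
  have "x_letter k (a + Suc j) = 1 - x_letter k (a + j)"
  proof (cases "x_letter k (a + j) = 0")
    case True
    then show ?thesis
      using not_00 x_letter_le_1[of k "Suc (a + j)"] by simp
  next
    case False
    then show ?thesis
      using x_letter_after_1 x_letter_le_1[of k "a + j"] by simp
  qed
  then show ?case
    using Suc by simp presburger
qed

lemma x_letter_block_cases:
  assumes "2 \<le> k"
  shows "(\<exists>c \<le> 1. map (x_letter k) [a..<a + p] = map (\<lambda>j. (c + j) mod 2) [0..<p])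
    \<or> (\<exists>w. a \<le> w \<and> w < a + p \<and> w mod (2 * k) = 2 * k - 1)"
proof (cases "\<exists>j. Suc j < p \<and> 2 * k - 2 \<le> (a + j) mod (2 * k)")
  case True
  then obtain j where j: "Suc j < p" "2 * k - 2 \<le> (a + j) mod (2 * k)"
    by blast
  have "(a + j) mod (2 * k) < 2 * k"
    using assms by simp
  then consider "(a + j) mod (2 * k) = 2 * k - 1" | "(a + j) mod (2 * k) = 2 * k - 2"
    using j(2) by linarith
  then show ?thesis
  proof cases
    case 1
    then show ?thesis
      using j(1) by (intro disjI2 exI[of _ "a + j"]) simp
  next
    case 2
    moreover have "Suc (2 * k - 2) = 2 * k - 1"
      using assms by simp
    ultimately have "Suc (a + j) mod (2 * k) = 2 * k - 1"
      by (simp add: mod_Suc)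
    then show ?thesis
      using j(1) by (intro disjI2 exI[of _ "Suc (a + j)"]) simp
  qed
next
  case False
  then have "map (x_letter k) [a..<a + p] = map (\<lambda>j. (x_letter k a + j) mod 2) [0..<p]"
    using x_letter_alternating[OF assms, of p a] by (simp add: list_eq_iff_nth_eq not_le)
  then show ?thesis
    using x_letter_le_1[of k a] by blast
qed

lemma x_letter_no_period_1:
  assumes "2 \<le> k" and "4 \<le> L"
    and per: "\<And>j. j + 1 < L \<Longrightarrow> x_letter k (s + j + 1) = x_letter k (s + j)"
  shows False
proof -
  have const: "x_letter k (s + j) = x_letter k s" if "j < 4" for j
    using that per assms(2) by (induction j) simp_all
  show False
  proof (cases "x_letter k s = 0")
    case True
    then have top: "2 * k - 2 \<le> (s + j) mod (2 * k)" if "j < 3" for j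
      using const[of j] const[of "Suc j"] that x_letter_00_iff[OF assms(1), of "s + j"] by simp
    have "1 < 2 * k - 1"
      using assms(1) by simp
    then have "s mod (2 * k) = 2 * k - 2" and "(s + 1) mod (2 * k) = 2 * k - 2"
      using top_two_residues_gap[of "2 * k" s 1] top_two_residues_gap[of "2 * k" "s + 1" 1]
        top[of 0] top[of 1] top[of 2] by (simp_all add: add.assoc)
    moreover have "Suc (2 * k - 2) = 2 * k - 1"
      using assms(1) by simp
    ultimately show False
      using assms(1) by (simp add: mod_Suc split: if_split_asm)
  next
    case False
    then show False
      using const[of 1] x_letter_after_1 by simp
  qed
qed

lemma x_letter_no_short_period:
  assumes "2 \<le> k" and "2 \<le> p" and "p < 2 * k - 1" and "2 * k \<le> L" and "2 * p < L"
    and per: "\<And>j. j + p < L \<Longrightarrow> x_letter k (s + j + p) = x_letter k (s + j)"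
  shows False
proof -
  have shift_00: "2 * k - 2 \<le> (s + j) mod (2 * k) \<longleftrightarrow> 2 * k - 2 \<le> (s + j + p) mod (2 * k)"
    if "Suc j + p < L" for j
  proof -
    have "x_letter k (s + j + p) = x_letter k (s + j)"
      and "x_letter k (Suc (s + j + p)) = x_letter k (Suc (s + j))"
      using per[of j] per[of "Suc j"] that by simp_all
    then show ?thesis
      using x_letter_00_iff[OF assms(1), of "s + j"] x_letter_00_iff[OF assms(1), of "s + j + p"]
      by simp
  qed
  have gap: False if "2 * k - 2 \<le> i mod (2 * k)" and "2 * k - 2 \<le> (i + p) mod (2 * k)" for i
    using top_two_residues_gap[OF that] assms(2,3) by simp
  obtain m where m: "m \<le> 2 * k - 2" "2 * k - 2 \<le> (s + m) mod (2 * k)"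
    using top_two_residue_in_window[of "2 * k" s] by blast
  show False
  proof (cases "Suc m + p < L")
    case True
    then show False
      using gap[of "s + m"] shift_00[of m] m(2) by simp
  next
    case False
    then have "Suc (m - p) + p < L" and "m - p + p = m"
      using m(1) assms(1,4,5) by linarith+
    then show False
      using gap[of "s + (m - p)"] shift_00[of "m - p"] m(2) by (simp add: add.assoc)
  qed
qed

section \<open>Factors of \<open>x\<^sub>k\<^sub>,\<^sub>r\<close>\<close>

lemma x_letter_block:
  assumes "1 \<le> k"
  shows "map (x_letter k) [0..<2 * k] = word_pow [0, 1] (k - 1) @ [0, 0]"
proof -
  have "[0..<2 * k] = [0..<2 * k - 2] @ [2 * k - 2, 2 * k - 1]"
    using assms upt_Suc_append[of 0 "2 * k - 2"] upt_Suc_append[of 0 "2 * k - 1"]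
    by (simp add: Suc_diff_Suc numeral_2_eq_2)
  moreover have "map (x_letter k) [0..<2 * k - 2] = word_pow [0, 1] (k - 1)"
    unfolding word_pow_01 by (simp add: x_letter_def right_diff_distrib')
  moreover have "x_letter k (2 * k - 2) = 0" and "x_letter k (2 * k - 1) = 0"
    using assms by (simp_all add: x_letter_def)
  ultimately show ?thesis
    by simp
qed

lemma x_word_eq_map:
  assumes "1 \<le> k" and "3 \<le> r"
  shows "x_word k r = map (x_letter k) [0..<2 * k * (r - 2) - 1]"
proof -
  have "map (x_letter k) [0..<2 * k - 1] = take (2 * k - 1) (map (x_letter k) [0..<2 * k])"
    by (simp add: take_map)
  then have tail: "word_pow [0, 1] (k - 1) @ [0] = map (x_letter k) [0..<2 * k - 1]"
    using assms(1) by (simp add: x_letter_block take_append)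
  have shift: "map (x_letter k) [(r - 3) * (2 * k)..<(r - 3) * (2 * k) + (2 * k - 1)]
      = map (x_letter k) [0..<2 * k - 1]"
    by (rule map_upt_shift) (rule x_letter_add_period)
  have len: "(r - 3) * (2 * k) + (2 * k - 1) = 2 * k * (r - 2) - 1"
  proof -
    have "r - 2 = Suc (r - 3)"
      using assms(2) by simp
    then show ?thesis
      using assms(1) by (simp add: algebra_simps)
  qed
  have "x_word k r = map (x_letter k) ([0..<(r - 3) * (2 * k)]
      @ [(r - 3) * (2 * k)..<(r - 3) * (2 * k) + (2 * k - 1)])"
    unfolding x_word_def x_letter_block[OF assms(1), symmetric] tail map_append shift
    using word_pow_map_upt[of "x_letter k" "2 * k" "r - 3", OF x_letter_add_period[of k _ 1, simplified]]
    by simp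
  then show ?thesis
    by (metis len upt_add_eq_append zero_le)
qed

lemma length_x_word:
  assumes "1 \<le> k" and "3 \<le> r"
  shows "length (x_word k r) = 2 * k * (r - 2) - 1"
  using x_word_eq_map[OF assms] by simp

lemma is_factor_x_word:
  assumes "1 \<le> k" and "3 \<le> r" and "is_factor v (x_word k r)"
  obtains s where "s + length v \<le> 2 * k * (r - 2) - 1"
    and "v = map (x_letter k) [s..<s + length v]"
proof -
  have "is_factor v (map (x_letter k) [0..<2 * k * (r - 2) - 1])"
    using assms(3) by (simp add: x_word_eq_map[OF assms(1,2)])
  then show ?thesis
    using is_factor_map_upt that by blast
qed

lemma x_word_no_power:
  assumes "4 \<le> k" and "3 \<le> r" and "r - 1 \<le> k" and "is_factor v (x_word k r)"
  shows "\<not> is_power k v"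
proof
  assume "is_power k v"
  then obtain u where "u \<noteq> []" and v: "v = word_pow u k"
    by (auto simp: is_power_def)
  define p where "p = length u"
  have "0 < p"
    using \<open>u \<noteq> []\<close> by (simp add: p_def)
  have "length v = k * p"
    by (simp add: v p_def)
  then obtain s where s: "s + k * p \<le> 2 * k * (r - 2) - 1"
    and v_map: "v = map (x_letter k) [s..<s + k * p]"
    using is_factor_x_word[of k r v] assms(1,2,4) by auto
  have per: "x_letter k (s + j + p) = x_letter k (s + j)" if "j + p < k * p" for j
  proof -
    have "v ! (j + p) = v ! j"
      using word_pow_periodic[of j u k] that by (simp add: v p_def)
    then show ?thesis
      using that by (simp add: v_map add.assoc)
  qed
  have "k * p < k * (2 * k - 2)"
  proof -
    have "2 * k * (r - 2) \<le> 2 * k * (k - 1)"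
      using assms(3) by (intro mult_le_mono2) linarith
    moreover have "2 * k * (k - 1) = k * (2 * k - 2)"
      by (simp add: right_diff_distrib')
    moreover have "0 < 2 * k * (r - 2)"
      using assms(1,2) by simp
    ultimately show ?thesis
      using s by linarith
  qed
  then have "p < 2 * k - 2"
    by simp
  show False
  proof (cases "p = 1")
    case True
    then have "x_letter k (s + j + 1) = x_letter k (s + j)" if "j + 1 < k" for j
      using per[of j] that by simp
    then show False
      using x_letter_no_period_1[of k k s] assms(1) by fastforce
  next
    case False
    have "2 \<le> p" and "2 * k \<le> k * p" and "2 * p < k * p"
      using False \<open>0 < p\<close> assms(1) by simp_all
    then show False
      using x_letter_no_short_period[of k p "k * p" s, OF _ _ _ _ _ per] assms(1) \<open>p < 2 * k - 2\<close>
      by linarith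
  qed
qed

lemma x_word_no_antipower:
  assumes "2 \<le> k" and "3 \<le> r" and "is_factor v (x_word k r)"
  shows "\<not> is_antipower r v"
proof
  assume "is_antipower r v"
  then obtain us p where us: "length us = r" "v = concat us" "distinct us"
    and len: "\<forall>u\<in>set us. length u = p"
    using assms(2) by (elim is_antipowerE) simp
  have "length v = r * p"
    using length_concat_same_length[OF len] us(1,2) by simp
  then obtain s where s: "s + r * p \<le> 2 * k * (r - 2) - 1"
    and v_map: "v = map (x_letter k) [s..<s + r * p]"
    using is_factor_x_word[of k r v] assms by auto
  define S where "S = {w. w < 2 * k * (r - 2) - 1 \<and> w mod (2 * k) = 2 * k - 1}"
  define Alt where "Alt = {i. i < r \<and> (\<exists>c \<le> 1. us ! i = map (\<lambda>j. (c + j) mod 2) [0..<p])}"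
  define Hit where "Hit = {i. i < r \<and> (\<exists>w\<in>S. s + i * p \<le> w \<and> w < s + i * p + p)}"
  have "{..<r} \<subseteq> Alt \<union> Hit"
  proof
    fix i
    assume "i \<in> {..<r}"
    then have block: "us ! i = map (x_letter k) [s + i * p..<s + i * p + p]"
      using concat_eq_map_upt_nth[OF len, of "x_letter k" s i] us(1,2) v_map by simp
    have "s + i * p + p \<le> s + r * p"
      using mult_le_mono1[of "Suc i" r p] \<open>i \<in> {..<r}\<close> by simp
    then have "s + i * p + p \<le> 2 * k * (r - 2) - 1"
      using s(1) by linarith
    from x_letter_block_cases[OF assms(1), of "s + i * p" p]
    show "i \<in> Alt \<union> Hit"
    proof
      assume "\<exists>c \<le> 1. map (x_letter k) [s + i * p..<s + i * p + p] = map (\<lambda>j. (c + j) mod 2) [0..<p]"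
      then show ?thesis
        using \<open>i \<in> {..<r}\<close> by (simp add: Alt_def block)
    next
      assume "\<exists>w. s + i * p \<le> w \<and> w < s + i * p + p \<and> w mod (2 * k) = 2 * k - 1"
      then obtain w where "s + i * p \<le> w" "w < s + i * p + p" "w mod (2 * k) = 2 * k - 1"
        by blast
      moreover from this have "w \<in> S"
        using \<open>s + i * p + p \<le> 2 * k * (r - 2) - 1\<close> by (simp add: S_def)
      ultimately show ?thesis
        using \<open>i \<in> {..<r}\<close> by (auto simp: Hit_def)
    qed
  qed
  moreover have "finite (Alt \<union> Hit)"
    by (rule finite_subset[of _ "{..<r}"]) (auto simp: Alt_def Hit_def)
  ultimately have "r \<le> card (Alt \<union> Hit)"
    using card_mono[of "Alt \<union> Hit" "{..<r}"] by simp
  then have "r \<le> card Alt + card Hit"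
    using card_Un_le[of Alt Hit] by linarith
  moreover have "card Alt \<le> 2"
    using card_alternating_blocks_le_2[OF us(3), of Alt p] us(1) by (auto simp: Alt_def)
  moreover have "finite S"
    by (rule finite_subset[of _ "{..<2 * k * (r - 2) - 1}"]) (auto simp: S_def)
  then have "card Hit \<le> card S"
    by (rule card_le_if_blocks_meet) (auto simp: Hit_def)
  moreover have "card S \<le> r - 3"
    using card_top_residue_le[of "2 * k" "r - 2"] assms(1) by (simp add: S_def)
  ultimately show False
    using assms(2) by linarith
qed

theorem theorem1:
  fixes k r :: nat
  assumes "r \<ge> 3" and "k \<ge> max (r - 1) 4"
  shows "int (length (x_word k r)) = 2 * int k * (int r - 2) - 1
     \<and> \<not> (\<exists>v. is_factor v (x_word k r) \<and> is_power k v)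
     \<and> \<not> (\<exists>v. is_factor v (x_word k r) \<and> is_antipower r v)"
proof (intro conjI)
  have "4 \<le> k" and "r - 1 \<le> k"
    using assms(2) by simp_all
  have "length (x_word k r) = 2 * k * (r - 2) - 1" and "1 \<le> 2 * k * (r - 2)"
    using length_x_word[of k r] \<open>4 \<le> k\<close> assms(1) by simp_all
  then show "int (length (x_word k r)) = 2 * int k * (int r - 2) - 1"
    using assms(1) by (simp add: of_nat_diff)
  show "\<not> (\<exists>v. is_factor v (x_word k r) \<and> is_power k v)"
    using x_word_no_power[OF \<open>4 \<le> k\<close> assms(1) \<open>r - 1 \<le> k\<close>] by blast
  show "\<not> (\<exists>v. is_factor v (x_word k r) \<and> is_antipower r v)"
    using x_word_no_antipower[of k r] \<open>4 \<le> k\<close> assms(1) by auto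
qed

end
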